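(* Let $m\ge0$, $n\ge1$, $1\le i\le n$ and $\varepsilon\in\{0,1\}$. There exists a digraph map $\Phi:I_{6m}^{\otimes n}\to|\sqcap^n_{i,\varepsilon}|_{2m}$ whose restriction to $|\sqcap^n_{i,\varepsilon}|_{6m}\subseteq I_{6m}^{\otimes n}$ equals the coordinatewise map $c^{2m}:|\sqcap^n_{i,\varepsilon}|_{6m}\to|\sqcap^n_{i,\varepsilon}|_{2m}$.
   Context: Digraphs: vertex sets with arrows $E\subseteq V^2$ containing the diagonal; digraph maps preserve arrows. Box product $G\otimes H$: arrow $(g,h)\to(g',h')$ iff ($g\to g'$, $h=h'$) or ($g=g'$, $h\to h'$). $I_k$ is the digraph with vertices $\{0,\dots,k\}$ and non-degenerate arrows $2a\to2a+1$ and $2b+2\to2b+1$. For $k\ge0$, $|\sqcap^n_{i,\varepsilon}|_{k}$ denotes the induced subdigraph of $I_k^{\otimes n}$ on the vertices $v=(v_1,\dots,v_n)$ such that either $v_j\in\{0,k\}$ for some $j\ne i$, or $v_i=(1-\varepsilon)k$. The map $c^{2m}:I_{6m}\to I_{2m}$ is $c^{2m}(x)=\min(\max(x-2m,0),2m)$ (a digraph map), applied coordinatewise to $I_{6m}^{\otimes n}\to I_{2m}^{\otimes n}$; it sends $|\sqcap^n_{i,\varepsilon}|_{6m}$ into $|\sqcap^n_{i,\varepsilon}|_{2m}$. *)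

theory Defs
  imports Main
begin

type_synonym 'a digraph = "'a set \<times> ('a \<times> 'a) set"

definition verts :: "'a digraph \<Rightarrow> 'a set" where "verts G = fst G"
definition arrows :: "'a digraph \<Rightarrow> ('a \<times> 'a) set" where "arrows G = snd G"

definition is_digraph :: "'a digraph \<Rightarrow> bool" where
  "is_digraph G \<longleftrightarrow> arrows G \<subseteq> verts G \<times> verts G \<and> (\<forall>v\<in>verts G. (v, v) \<in> arrows G)"

definition digraph_map :: "'a digraph \<Rightarrow> 'b digraph \<Rightarrow> ('a \<Rightarrow> 'b) \<Rightarrow> bool" where
  "digraph_map G H f \<longleftrightarrow> (\<forall>v\<in>verts G. f v \<in> verts H) \<and>
     (\<forall>u v. (u, v) \<in> arrows G \<longrightarrow> (f u, f v) \<in> arrows H)"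

definition induced :: "'a digraph \<Rightarrow> 'a set \<Rightarrow> 'a digraph" where
  "induced G S = (verts G \<inter> S, arrows G \<inter> (S \<times> S))"

definition I_arrow :: "nat \<Rightarrow> nat \<Rightarrow> bool" where
  "I_arrow a b \<longleftrightarrow> a = b \<or> (\<exists>c. a = 2*c \<and> b = 2*c+1) \<or> (\<exists>c. a = 2*c+2 \<and> b = 2*c+1)"

definition I_dg :: "nat \<Rightarrow> nat digraph" where
  "I_dg k = ({0..k}, {(a, b). a \<le> k \<and> b \<le> k \<and> I_arrow a b})"

text \<open>n-fold box product G^{\<otimes>n}, vertices are lists of length n (coordinate j+1 is entry j).
  (u -> v) iff they differ in at most one coordinate j, where u!j -> v!j in G.\<close>
definition box_pow :: "'a digraph \<Rightarrow> nat \<Rightarrow> 'a list digraph" where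
  "box_pow G n =
    ({v. length v = n \<and> set v \<subseteq> verts G},
     {(u, v). length u = n \<and> length v = n \<and> set u \<subseteq> verts G \<and> set v \<subseteq> verts G \<and>
        (\<exists>j<n. (u ! j, v ! j) \<in> arrows G \<and> (\<forall>l<n. l \<noteq> j \<longrightarrow> u ! l = v ! l))})"

text \<open>|\<sqcap>^n_{i,\<epsilon>}|_k, with 1-based index i (so coordinate i is list entry i-1).\<close>
definition sqcap :: "nat \<Rightarrow> nat \<Rightarrow> nat \<Rightarrow> nat \<Rightarrow> nat list digraph" where
  "sqcap n i eps k = induced (box_pow (I_dg k) n)
     {v. (\<exists>j<n. j \<noteq> i - 1 \<and> (v ! j = 0 \<or> v ! j = k)) \<or> v ! (i - 1) = (1 - eps) * k}"

definition cmap :: "nat \<Rightarrow> nat \<Rightarrow> nat" where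
  "cmap m x = nat (min (max (int x - 2 * int m) 0) (2 * int m))"

end

theory Submission
  imports Defs
begin

(* Let d(x) = min(2m, x, 6m - x) be the distance of x \<in> I_{6m} from the ends, capped at 2m,
  and h(v) the minimum of d(v_j) over the coordinates j \<noteq> i (or 2m if there is none).
  \<Phi> applies c^{2m} to every coordinate, except that coordinate i is then pushed by h(v)
  towards the face v_i = (1 - \<epsilon>) 2m: it becomes max(h, c(v_i)) for \<epsilon> = 0 and
  min(2m - h, c(v_i)) for \<epsilon> = 1.
  If some v_j with j \<noteq> i lies in an outer third of [0, 6m], then c(v_j) is 0 or 2m;
  otherwise h(v) = 2m and coordinate i lands on the face. On |\<sqcap>|_{6m} either h(v) = 0
  or v_i already lies on the face, so \<Phi> agrees with c^{2m} there. Finally, d changes only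
  on the outer thirds and c only on the middle third, so along an arrow in a coordinate
  j \<noteq> i the image moves either in coordinate j or in coordinate i, never in both. *)

definition box_step :: "('a \<Rightarrow> 'a \<Rightarrow> bool) \<Rightarrow> 'a list \<Rightarrow> 'a list \<Rightarrow> bool" where
  "box_step R u v \<longleftrightarrow> length u = length v \<and>
     (\<exists>j<length v. R (u ! j) (v ! j) \<and> (\<forall>l<length v. l \<noteq> j \<longrightarrow> u ! l = v ! l))"

lemma box_step_mono:
  assumes "box_step R u v" "\<And>a b. a \<in> set u \<Longrightarrow> b \<in> set v \<Longrightarrow> R a b \<Longrightarrow> S a b"
  shows "box_step S u v"
  using assms unfolding box_step_def by (metis nth_mem)

lemma box_step_list_update: "i < length xs \<Longrightarrow> R x y \<Longrightarrow> box_step R (xs[i := x]) (xs[i := y])"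
  unfolding box_step_def by (auto simp: nth_list_update)

lemma digraph_map_induced_iff:
  assumes "arrows G \<subseteq> verts G \<times> verts G"
  shows "digraph_map G (induced H S) f \<longleftrightarrow> digraph_map G H f \<and> f ` verts G \<subseteq> verts (induced H S)"
  using assms unfolding digraph_map_def induced_def verts_def arrows_def by fastforce

lemma mem_verts_box_pow: "v \<in> verts (box_pow G n) \<longleftrightarrow> length v = n \<and> set v \<subseteq> verts G"
  by (simp add: box_pow_def verts_def)

lemma mem_arrows_box_pow: "(u, v) \<in> arrows (box_pow G n) \<longleftrightarrow>
    u \<in> verts (box_pow G n) \<and> v \<in> verts (box_pow G n) \<and> box_step (\<lambda>a b. (a, b) \<in> arrows G) u v"
proof -
  have unfolded: "(u, v) \<in> arrows (box_pow G n) \<longleftrightarrow> u \<in> verts (box_pow G n) \<and> v \<in> verts (box_pow G n) \<and>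
      (\<exists>j<n. (u ! j, v ! j) \<in> arrows G \<and> (\<forall>l<n. l \<noteq> j \<longrightarrow> u ! l = v ! l))"
    unfolding mem_verts_box_pow by (simp add: box_pow_def arrows_def verts_def conj_ac)
  show ?thesis
    unfolding unfolded box_step_def mem_verts_box_pow by (intro iffI; elim conjE; simp)
qed

lemma arrows_box_pow_subset: "arrows (box_pow G n) \<subseteq> verts (box_pow G n) \<times> verts (box_pow G n)"
  by (auto simp: mem_arrows_box_pow)

lemma I_arrow_iff: "I_arrow a b \<longleftrightarrow> a = b \<or> (even a \<and> (b = a + 1 \<or> a = b + 1))"
  unfolding I_arrow_def by (auto elim!: evenE) presburger+

lemma verts_I_dg: "verts (I_dg k) = {0..k}"
  by (simp add: I_dg_def verts_def)

lemma mem_arrows_I_dg: "(a, b) \<in> arrows (I_dg k) \<longleftrightarrow> a \<le> k \<and> b \<le> k \<and> I_arrow a b"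
  by (simp add: I_dg_def arrows_def)

lemma mem_verts_box_pow_I_dg:
  "v \<in> verts (box_pow (I_dg k) n) \<longleftrightarrow> length v = n \<and> (\<forall>x\<in>set v. x \<le> k)"
  by (auto simp: mem_verts_box_pow verts_I_dg)

lemma mem_arrows_box_pow_I_dg: "(u, v) \<in> arrows (box_pow (I_dg k) n) \<longleftrightarrow>
    u \<in> verts (box_pow (I_dg k) n) \<and> v \<in> verts (box_pow (I_dg k) n) \<and> box_step I_arrow u v"
  unfolding mem_arrows_box_pow
  by (auto simp: mem_verts_box_pow_I_dg mem_arrows_I_dg elim!: box_step_mono)

lemma mem_verts_sqcap: "v \<in> verts (sqcap n i eps k) \<longleftrightarrow> v \<in> verts (box_pow (I_dg k) n) \<and>
    ((\<exists>j<n. j \<noteq> i - 1 \<and> (v ! j = 0 \<or> v ! j = k)) \<or> v ! (i - 1) = (1 - eps) * k)"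
  by (simp add: sqcap_def induced_def verts_def)

lemma I_arrow_max: "I_arrow a b \<Longrightarrow> I_arrow (max c a) (max c b)"
  unfolding I_arrow_iff by (auto simp: max_def)

lemma I_arrow_min: "I_arrow a b \<Longrightarrow> I_arrow (min c a) (min c b)"
  unfolding I_arrow_iff by (auto simp: min_def) presburger

(* No bounds are needed here or below: truncated subtraction clamps at 0, and since c is
  even the clamped values still form an arrow. *)
lemma I_arrow_diff_left: "even c \<Longrightarrow> I_arrow a b \<Longrightarrow> I_arrow (c - a) (c - b)"
  unfolding I_arrow_iff by auto

lemma I_arrow_diff_right: "even c \<Longrightarrow> I_arrow a b \<Longrightarrow> I_arrow (a - c) (b - c)"
  unfolding I_arrow_iff by auto

lemma I_arrow_min_reflect: "even c \<Longrightarrow> I_arrow a b \<Longrightarrow> I_arrow (min a (c - a)) (min b (c - b))"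
  unfolding I_arrow_iff by (auto simp: min_def)

lemma I_arrow_Min_insert_image:
  assumes "finite S" "j \<in> S" "\<And>l. l \<in> S \<Longrightarrow> l \<noteq> j \<Longrightarrow> f l = g l" "I_arrow (f j) (g j)"
  shows "I_arrow (Min (insert c (f ` S))) (Min (insert c (g ` S)))"
proof -
  have split: "Min (insert c (h ` S)) = min (h j) (Min (insert c (h ` (S - {j}))))" for h
  proof -
    have "insert c (h ` S) = insert (h j) (insert c (h ` (S - {j})))"
      using assms(2) by blast
    then show ?thesis
      using assms(1) by simp
  qed
  have "f ` (S - {j}) = g ` (S - {j})"
    using assms(3) by (intro image_cong) auto
  then show ?thesis
    unfolding split by (simp add: I_arrow_min assms(4) min.commute[of "f j"] min.commute[of "g j"])
qed

lemma cmap_eq: "cmap m x = min (2 * m) (x - 2 * m)"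
  unfolding cmap_def by (simp add: min_def max_def) linarith

lemma cmap_le: "cmap m x \<le> 2 * m"
  by (simp add: cmap_eq)

lemma I_arrow_cmap: "I_arrow a b \<Longrightarrow> I_arrow (cmap m a) (cmap m b)"
  unfolding cmap_eq by (intro I_arrow_min I_arrow_diff_right) auto

definition end_dist :: "nat \<Rightarrow> nat \<Rightarrow> nat" where
  "end_dist m x = min (2 * m) (min x (6 * m - x))"

lemma I_arrow_end_dist: "I_arrow a b \<Longrightarrow> I_arrow (end_dist m a) (end_dist m b)"
  unfolding end_dist_def by (intro I_arrow_min I_arrow_min_reflect) auto

lemma end_dist_eq_or_cmap_eq: "I_arrow a b \<Longrightarrow> end_dist m a = end_dist m b \<or> cmap m a = cmap m b"
  unfolding I_arrow_iff end_dist_def cmap_eq by (auto simp: min_def) arith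

definition face_dist :: "nat \<Rightarrow> nat \<Rightarrow> nat list \<Rightarrow> nat" where
  "face_dist m i0 v = Min (insert (2 * m) ((\<lambda>j. end_dist m (v ! j)) ` ({..<length v} - {i0})))"

lemma face_dist_le: "face_dist m i0 v \<le> 2 * m"
  unfolding face_dist_def by (rule Min_le) auto

lemma face_dist_eq_0:
  assumes "j < length v" "j \<noteq> i0" "v ! j = 0 \<or> v ! j = 6 * m"
  shows "face_dist m i0 v = 0"
proof -
  have "face_dist m i0 v \<le> end_dist m (v ! j)"
    unfolding face_dist_def by (rule Min_le) (use assms(1,2) in auto)
  also have "end_dist m (v ! j) = 0"
    using assms(3) by (auto simp: end_dist_def)
  finally show ?thesis by simp
qed

lemma face_dist_eq_2m:
  assumes "\<And>j. j < length v \<Longrightarrow> j \<noteq> i0 \<Longrightarrow> 2 * m \<le> v ! j \<and> v ! j \<le> 4 * m"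
  shows "face_dist m i0 v = 2 * m"
proof (rule antisym)
  show "2 * m \<le> face_dist m i0 v"
    unfolding face_dist_def using assms by (fastforce simp: Min_ge_iff end_dist_def)
qed (rule face_dist_le)

lemma face_dist_cong:
  assumes "length u = length v"
    and "\<And>j. j < length v \<Longrightarrow> j \<noteq> i0 \<Longrightarrow> end_dist m (u ! j) = end_dist m (v ! j)"
  shows "face_dist m i0 u = face_dist m i0 v"
  unfolding face_dist_def using assms
  by (intro arg_cong[where f = Min] arg_cong[where f = "insert _"] image_cong) auto

lemma I_arrow_face_dist:
  assumes "length u = length v" "j < length v" "j \<noteq> i0" "I_arrow (u ! j) (v ! j)"
    "\<And>l. l < length v \<Longrightarrow> l \<noteq> j \<Longrightarrow> u ! l = v ! l"
  shows "I_arrow (face_dist m i0 u) (face_dist m i0 v)"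
  unfolding face_dist_def assms(1) using assms(2-5)
  by (intro I_arrow_Min_insert_image I_arrow_end_dist) auto

definition push :: "nat \<Rightarrow> nat \<Rightarrow> nat \<Rightarrow> nat \<Rightarrow> nat" where
  "push m eps h x = (if eps = 0 then max h x else min (2 * m - h) x)"

lemma I_arrow_push: "I_arrow x y \<Longrightarrow> I_arrow (push m eps h x) (push m eps h y)"
  unfolding push_def by (auto intro: I_arrow_max I_arrow_min)

lemma I_arrow_push_shift: "I_arrow h h' \<Longrightarrow> I_arrow (push m eps h x) (push m eps h' x)"
  unfolding push_def max.commute[of _ x] min.commute[of _ x]
  by (simp add: I_arrow_max I_arrow_min I_arrow_diff_left)

lemma push_le: "h \<le> 2 * m \<Longrightarrow> x \<le> 2 * m \<Longrightarrow> push m eps h x \<le> 2 * m"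
  unfolding push_def by auto

lemma push_0: "x \<le> 2 * m \<Longrightarrow> push m eps 0 x = x"
  unfolding push_def by auto

lemma push_2m: "eps \<in> {0, 1} \<Longrightarrow> x \<le> 2 * m \<Longrightarrow> push m eps (2 * m) x = (1 - eps) * (2 * m)"
  unfolding push_def by auto

lemma push_on_face:
  "eps \<in> {0, 1} \<Longrightarrow> h \<le> 2 * m \<Longrightarrow> push m eps h ((1 - eps) * (2 * m)) = (1 - eps) * (2 * m)"
  unfolding push_def by auto

definition cmap_ext :: "nat \<Rightarrow> nat \<Rightarrow> nat \<Rightarrow> nat list \<Rightarrow> nat list" where
  "cmap_ext m i0 eps v = (map (cmap m) v)[i0 := push m eps (face_dist m i0 v) (cmap m (v ! i0))]"

lemma length_cmap_ext [simp]: "length (cmap_ext m i0 eps v) = length v"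
  by (simp add: cmap_ext_def)

lemma nth_cmap_ext: "l < length v \<Longrightarrow> cmap_ext m i0 eps v ! l =
    (if l = i0 then push m eps (face_dist m i0 v) (cmap m (v ! i0)) else cmap m (v ! l))"
  by (simp add: cmap_ext_def nth_list_update)

lemma set_cmap_ext_le: "x \<in> set (cmap_ext m i0 eps v) \<Longrightarrow> x \<le> 2 * m"
  by (auto simp: in_set_conv_nth nth_cmap_ext cmap_le push_le face_dist_le)

lemma box_step_cmap_ext:
  assumes "box_step I_arrow u v" "i0 < length v"
  shows "box_step I_arrow (cmap_ext m i0 eps u) (cmap_ext m i0 eps v)"
proof -
  obtain j where len: "length u = length v" and j: "j < length v" "I_arrow (u ! j) (v ! j)"
    and same: "\<And>l. l < length v \<Longrightarrow> l \<noteq> j \<Longrightarrow> u ! l = v ! l"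
    using assms(1) unfolding box_step_def by blast
  show ?thesis
  proof (cases "j \<noteq> i0 \<and> cmap m (u ! j) = cmap m (v ! j)")
    case True
    then have "map (cmap m) u = map (cmap m) v"
      using len same by (intro nth_equalityI) force+
    moreover have "I_arrow (face_dist m i0 u) (face_dist m i0 v)"
      using len j same True by (intro I_arrow_face_dist) auto
    ultimately show ?thesis
      unfolding cmap_ext_def using True same assms(2)
      by (simp add: box_step_list_update I_arrow_push_shift)
  next
    case False
    have "face_dist m i0 u = face_dist m i0 v"
    proof (rule face_dist_cong[OF len])
      show "end_dist m (u ! l) = end_dist m (v ! l)" if "l < length v" "l \<noteq> i0" for l
        using same[of l] that False end_dist_eq_or_cmap_eq[OF j(2)] by (cases "l = j") auto
    qed
    then show ?thesis
      unfolding box_step_def using len j same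
      by (intro conjI exI[of _ j]) (auto simp: nth_cmap_ext I_arrow_push I_arrow_cmap)
  qed
qed

lemma digraph_map_cmap_ext:
  assumes "i0 < n"
  shows "digraph_map (box_pow (I_dg (6 * m)) n) (box_pow (I_dg (2 * m)) n) (cmap_ext m i0 eps)"
  unfolding digraph_map_def
proof (intro conjI allI ballI impI)
  show "cmap_ext m i0 eps v \<in> verts (box_pow (I_dg (2 * m)) n)"
    if "v \<in> verts (box_pow (I_dg (6 * m)) n)" for v
    using that by (simp add: set_cmap_ext_le mem_verts_box_pow_I_dg)
  show "(cmap_ext m i0 eps u, cmap_ext m i0 eps v) \<in> arrows (box_pow (I_dg (2 * m)) n)"
    if "(u, v) \<in> arrows (box_pow (I_dg (6 * m)) n)" for u v
    using that assms
    by (simp add: box_step_cmap_ext set_cmap_ext_le mem_arrows_box_pow_I_dg mem_verts_box_pow_I_dg)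
qed

lemma cmap_ext_mem_verts_sqcap:
  assumes "eps \<in> {0, 1}" "i0 < n" "v \<in> verts (box_pow (I_dg (6 * m)) n)"
  shows "cmap_ext m i0 eps v \<in> verts (sqcap n (Suc i0) eps (2 * m))"
proof -
  have len: "length v = n" and bounded: "\<forall>x\<in>set v. x \<le> 6 * m"
    using assms(3) by (simp_all add: mem_verts_box_pow_I_dg)
  let ?w = "cmap_ext m i0 eps v"
  have "(\<exists>j<n. j \<noteq> i0 \<and> (?w ! j = 0 \<or> ?w ! j = 2 * m)) \<or> ?w ! i0 = (1 - eps) * (2 * m)"
  proof (cases "\<exists>j<n. j \<noteq> i0 \<and> (v ! j \<le> 2 * m \<or> 4 * m \<le> v ! j)")
    case True
    then obtain j where j: "j < n" "j \<noteq> i0" "v ! j \<le> 2 * m \<or> 4 * m \<le> v ! j"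
      by blast
    moreover have "v ! j \<le> 6 * m"
      using bounded len j(1) by simp
    ultimately have "?w ! j = 0 \<or> ?w ! j = 2 * m"
      using len by (auto simp: nth_cmap_ext cmap_eq)
    then show ?thesis
      using j by blast
  next
    case False
    then have "face_dist m i0 v = 2 * m"
      using len by (intro face_dist_eq_2m) auto
    then show ?thesis
      using assms(1,2) len by (simp add: nth_cmap_ext push_2m cmap_le)
  qed
  then show ?thesis
    using len set_cmap_ext_le by (simp add: mem_verts_sqcap mem_verts_box_pow_I_dg)
qed

lemma cmap_ext_eq_on_sqcap:
  assumes "eps \<in> {0, 1}" "v \<in> verts (sqcap n (Suc i0) eps (6 * m))"
  shows "cmap_ext m i0 eps v = map (cmap m) v"
proof -
  have len: "length v = n"
    and face: "(\<exists>j<n. j \<noteq> i0 \<and> (v ! j = 0 \<or> v ! j = 6 * m)) \<or> v ! i0 = (1 - eps) * (6 * m)"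
    using assms(2) by (simp_all add: mem_verts_sqcap mem_verts_box_pow_I_dg)
  have "push m eps (face_dist m i0 v) (cmap m (v ! i0)) = cmap m (v ! i0)"
  proof (cases "\<exists>j<n. j \<noteq> i0 \<and> (v ! j = 0 \<or> v ! j = 6 * m)")
    case True
    then have "face_dist m i0 v = 0"
      using len face_dist_eq_0 by blast
    then show ?thesis
      by (simp add: push_0 cmap_le)
  next
    case False
    then have "cmap m (v ! i0) = (1 - eps) * (2 * m)"
      using face assms(1) by (auto simp: cmap_eq)
    then show ?thesis
      using push_on_face[OF assms(1) face_dist_le] by simp
  qed
  then show ?thesis
    by (intro nth_equalityI) (simp_all add: nth_cmap_ext)
qed

theorem mainTheorem10:
  fixes m n i eps :: nat
  assumes "n \<ge> 1" and "1 \<le> i" and "i \<le> n" and "eps \<in> {0, 1}"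
  shows "\<exists>\<Phi>. digraph_map (box_pow (I_dg (6 * m)) n) (sqcap n i eps (2 * m)) \<Phi> \<and>
           (\<forall>v\<in>verts (sqcap n i eps (6 * m)). \<Phi> v = map (cmap m) v)"
proof -
  define i0 where "i0 = i - 1"
  have i: "i = Suc i0" and i0: "i0 < n"
    using assms(2,3) by (simp_all add: i0_def)
  have "digraph_map (box_pow (I_dg (6 * m)) n) (sqcap n i eps (2 * m)) (cmap_ext m i0 eps)"
    using digraph_map_cmap_ext[OF i0] cmap_ext_mem_verts_sqcap[OF assms(4) i0]
    unfolding i sqcap_def digraph_map_induced_iff[OF arrows_box_pow_subset] by blast
  moreover have "cmap_ext m i0 eps v = map (cmap m) v" if "v \<in> verts (sqcap n i eps (6 * m))" for v
    using cmap_ext_eq_on_sqcap[OF assms(4)] that unfolding i by blast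
  ultimately show ?thesis
    by blast
qed

end
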